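(* Let $\tilde{\mathbf Q}=\mathrm{diag}(\tilde{\mathbf q})$ with $|\tilde q_k|=1$ for all $k$, and let all quantities be as defined in the context. Then: (i) For every $\mathbf Q=\mathrm{diag}(\mathbf q)$ with $|q_k|=1$ for all $k$, $$g(\mathbf Q)\ \ge\ \tilde g(\mathbf Q,\tilde{\mathbf Q}):=-2n\lambda_1(\mathbf Z)+2\,\mathrm{Re}\{\mathbf q^H(\lambda_1(\mathbf Z)\mathbf I-\mathbf Z)\tilde{\mathbf q}\}+\tilde{\mathbf q}^H\mathbf Z\tilde{\mathbf q}+2\,\mathrm{Re}\{\mathbf q^H\mathbf a_4\}+C_1(\tilde{\mathbf Q})+C_2(\tilde{\mathbf Q}),$$ with equality when $\mathbf Q=\tilde{\mathbf Q}$. (ii) A maximizer of $\tilde g(\cdot,\tilde{\mathbf Q})$ over all unit-modulus diagonal $\mathbf Q$ is $$\mathbf Q=\mathrm{diag}\big(e^{\mathrm j\arg(v_1)},\dots,e^{\mathrm j\arg(v_n)}\big),\qquad \mathbf v=(\lambda_1(\mathbf Z)\mathbf I-\mathbf Z)\tilde{\mathbf q}+\mathbf a_4,$$ where $v_k$ denotes the $k$-th entry of $\mathbf v$ (if some $v_k=0$, the $k$-th phase is arbitrary).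
   Context: Let $m,d,n$ be positive integers and $\mathrm j$ the imaginary unit. Let $\mathbf H_{AI}\in\mathbb C^{n\times m}$ and $\mathbf H_{IB}\in\mathbb C^{d\times n}$, and let $R\in\mathbb C^{m\times m}$ be Hermitian positive semidefinite. Set $\mathbf L=\mathbf H_{AI}R\mathbf H_{AI}^H$ and let $\mathbf L^{1/2}$ be its positive semidefinite square root. Here $\ln$ denotes the natural logarithm. For a diagonal $\mathbf Q=\mathrm{diag}(\mathbf q)$, with $\mathbf q\in\mathbb C^n$ and $|q_k|=1$ for all $k$, define $$g(\mathbf Q)=\ln\det(\mathbf I_d+\mathbf H_{IB}\mathbf Q\mathbf L\mathbf Q^H\mathbf H_{IB}^H)\qquad\text{and}\qquad \mathbf P=\mathbf H_{IB}\mathbf Q\mathbf L^{1/2}.$$ Given the feasible point $\tilde{\mathbf Q}=\mathrm{diag}(\tilde{\mathbf q})$ with $|\tilde q_k|=1$, define: - $\tilde{\mathbf P}=\mathbf H_{IB}\tilde{\mathbf Q}\mathbf L^{1/2}$; - $\tilde{\mathbf Q}_B=\mathbf I-\tilde{\mathbf P}(\mathbf I+\tilde{\mathbf P}^H\tilde{\mathbf P})^{-1}\tilde{\mathbf P}^H$, which is positive definite; - $\mathbf J_B=\tilde{\mathbf P}(\mathbf I+\tilde{\mathbf P}^H\tilde{\mathbf P})^{-1}$; - $\mathbf A_1=\tilde{\mathbf Q}_B^{-1}\mathbf J_B\mathbf L^{1/2}$, $\mathbf A_2=\mathbf H_{IB}^H\mathbf H_{IB}$, $\mathbf A_3=\mathbf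 L^{1/2}\mathbf J_B^H$, $\mathbf A_4=\mathbf H_{IB}^H\tilde{\mathbf Q}_B^{-1}\mathbf J_B\mathbf L^{1/2}$; - $\mathbf Z=\mathbf A_2\odot(\mathbf A_3\mathbf A_1)^T$, where $\odot$ is the Hadamard (entrywise) product; $\mathbf Z$ is Hermitian and $\lambda_1(\mathbf Z)$ denotes its largest eigenvalue; - $\mathbf a_4\in\mathbb C^n$, the vector of diagonal entries of $\mathbf A_4$; - $C_1(\tilde{\mathbf Q})=-\ln\det\tilde{\mathbf Q}_B+d-\mathrm{tr}(\tilde{\mathbf Q}_B^{-1})$; - $C_2(\tilde{\mathbf Q})=d-\mathrm{tr}(\tilde{\mathbf Q}_B^{-1})+\mathrm{tr}(\tilde{\mathbf Q}_B^{-1}\mathbf J_B\tilde{\mathbf P}^H\tilde{\mathbf P}\mathbf J_B^H)$. *)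

theory Defs
  imports "HOL-Analysis.Analysis"
begin

text \<open>Complex matrices with finite index types: a value of type complex^'c^'r is an
  r x c matrix (rows indexed by 'r, columns by 'c).\<close>

definition ctrans :: "complex^'c^'r \<Rightarrow> complex^'r^'c" where
  "ctrans A = (\<chi> i j. cnj (A $ j $ i))"

definition diagm :: "complex^'n \<Rightarrow> complex^'n^'n" where
  "diagm q = (\<chi> i j. if i = j then q $ i else 0)"

definition diagv :: "complex^'n^'n \<Rightarrow> complex^'n" where
  "diagv A = (\<chi> i. A $ i $ i)"

definition hadamard :: "complex^'c^'r \<Rightarrow> complex^'c^'r \<Rightarrow> complex^'c^'r" where
  "hadamard A B = (\<chi> i j. A $ i $ j * B $ i $ j)"

definition cdot :: "complex^'n \<Rightarrow> complex^'n \<Rightarrow> complex" where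
  "cdot x y = (\<Sum>i\<in>UNIV. cnj (x $ i) * y $ i)"

definition hermitian :: "complex^'n^'n \<Rightarrow> bool" where
  "hermitian A \<longleftrightarrow> ctrans A = A"

definition psd :: "complex^'n^'n \<Rightarrow> bool" where
  "psd A \<longleftrightarrow> hermitian A \<and> (\<forall>x. 0 \<le> Re (cdot x (A *v x)))"

definition unimod :: "complex^'n \<Rightarrow> bool" where
  "unimod q \<longleftrightarrow> (\<forall>k. cmod (q $ k) = 1)"

definition lambda1 :: "complex^'n^'n \<Rightarrow> real" where
  "lambda1 Z = Max {x::real. \<exists>v. v \<noteq> 0 \<and> Z *v v = complex_of_real x *s v}"

end

theory Submission
  imports Defs
begin

text \<open>Write \<open>P = H_IB Q L^(1/2)\<close>, so that \<open>g(Q) = ln det (I + P P^H)\<close>. For every positive definite \<open>W\<close>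
  and every receive filter \<open>U\<close>, \<open>ln det (I + P P^H) \<ge> ln det W + d - tr (W E(U))\<close>, where \<open>E(U)\<close> is
  the mean squared error matrix of \<open>U\<close>: completing the square gives
  \<open>E(U) = G^-1 + (U - G^-1 P) (I + P^H P) (U - G^-1 P)^H\<close> with \<open>G = I + P P^H\<close>, and
  \<open>ln det X \<le> tr X - d\<close> for positive definite \<open>X\<close>. Taking for \<open>U\<close> the MMSE filter \<open>J_B\<close> at the
  current point and \<open>W = Q_B^-1\<close> gives a minorant that is tight there and equals the concave
  quadratic \<open>C_1 + C_2 + 2 Re (q^H a_4) - q^H Z q\<close> in \<open>q\<close>. On the torus \<open>|q_k| = 1\<close> the norm
  \<open>q^H q = n\<close> is constant, so \<open>\<lambda>_1(Z) I - Z \<ge> 0\<close> lets one replace \<open>-q^H Z q\<close> by its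
  linearisation at the current point. What remains is \<open>2 Re (q^H v)\<close> plus a constant, which is
  maximised by aligning the phases of \<open>q\<close> with those of \<open>v\<close>.\<close>

section \<open>Conjugate transpose and the Hermitian inner product\<close>

lemma ctrans_nth [simp]: "ctrans A $ i $ j = cnj (A $ j $ i)"
  by (simp add: ctrans_def)

lemma ctrans_ctrans [simp]: "ctrans (ctrans A) = A"
  by (simp add: vec_eq_iff)

lemma ctrans_matrix_mult: "ctrans (A ** B) = ctrans B ** ctrans A"
  by (simp add: vec_eq_iff matrix_matrix_mult_def mult.commute)

lemma ctrans_add: "ctrans (A + B) = ctrans A + ctrans B"
  by (simp add: vec_eq_iff)

lemma ctrans_diff: "ctrans (A - B) = ctrans A - ctrans B"
  by (simp add: vec_eq_iff)

lemma ctrans_mat: "ctrans (mat c :: complex^'n^'n) = mat (cnj c)"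
  by (simp add: vec_eq_iff mat_def)

lemma ctrans_diagm: "ctrans (diagm q) = diagm (\<chi> i. cnj (q $ i))"
  by (simp add: vec_eq_iff diagm_def)

lemma trace_ctrans: "trace (ctrans A) = cnj (trace A)"
  by (simp add: trace_def)

lemma hermitian_iff: "hermitian A \<longleftrightarrow> ctrans A = A"
  by (simp add: hermitian_def)

lemma mat_vec_nth: "(A *v x) $ i = (\<Sum>j\<in>UNIV. A $ i $ j * x $ j)"
  by (simp add: matrix_vector_mult_def)

lemma mat_mul_nth: "(A ** B) $ i $ j = (\<Sum>k\<in>UNIV. A $ i $ k * B $ k $ j)"
  by (simp add: matrix_matrix_mult_def)

lemma mat1_nth: "(mat 1 :: complex^'n^'n) $ i $ j = (if i = j then 1 else 0)"
  by (simp add: mat_def)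

lemma matrix_mult_add_rdistrib: "(A + B) ** C = A ** C + B ** (C :: 'a::semiring_1^'p^'n)"
  by (simp add: matrix_matrix_mult_def vec_eq_iff distrib_right sum.distrib)

lemma matrix_mult_diff_ldistrib: "A ** (B - C) = A ** B - A ** (C :: 'a::ring_1^'p^'n)"
  by (simp add: matrix_matrix_mult_def vec_eq_iff right_diff_distrib sum_subtractf)

lemma matrix_mult_diff_rdistrib: "(A - B) ** C = A ** C - B ** (C :: 'a::ring_1^'p^'n)"
  by (simp add: matrix_matrix_mult_def vec_eq_iff left_diff_distrib sum_subtractf)

lemma column_matrix_mult: "column j (A ** B) = A *v column j B"
  by (simp add: vec_eq_iff column_def mat_mul_nth mat_vec_nth)

lemma matrix_inv_eq:
  fixes A B :: "complex^'n^'n"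
  assumes "A ** B = mat 1"
  shows "matrix_inv A = B"
proof -
  have BA: "B ** A = mat 1" using assms matrix_left_right_inverse by blast
  have "\<exists>A'. A ** A' = mat 1 \<and> A' ** A = mat 1" using assms BA by blast
  then have inv: "A ** matrix_inv A = mat 1 \<and> matrix_inv A ** A = mat 1"
    unfolding matrix_inv_def by (rule someI_ex)
  have "matrix_inv A = (B ** A) ** matrix_inv A" using BA by simp
  also have "\<dots> = B" using inv by (simp flip: matrix_mul_assoc)
  finally show ?thesis .
qed

lemma cdot_matrix_vector: "cdot x (A *v y) = cdot (ctrans A *v x) y"
proof -
  have "cdot x (A *v y) = (\<Sum>i\<in>UNIV. \<Sum>j\<in>UNIV. cnj (x $ i) * (A $ i $ j * y $ j))"
    unfolding cdot_def matrix_vector_mult_def by (simp add: sum_distrib_left)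
  also have "\<dots> = (\<Sum>j\<in>UNIV. \<Sum>i\<in>UNIV. cnj (x $ i) * (A $ i $ j * y $ j))"
    by (rule sum.swap)
  also have "\<dots> = cdot (ctrans A *v x) y"
    unfolding cdot_def matrix_vector_mult_def by (simp add: sum_distrib_left mult_ac)
  finally show ?thesis .
qed

lemma hermitian_cdot_swap: "hermitian A \<Longrightarrow> cdot x (A *v y) = cdot (A *v x) y"
  by (metis cdot_matrix_vector hermitian_iff)

lemma cdot_add_right: "cdot x (y + z) = cdot x y + cdot x z"
  by (simp add: cdot_def distrib_left sum.distrib)

lemma cdot_diff_right: "cdot x (y - z) = cdot x y - cdot x z"
  by (simp add: cdot_def right_diff_distrib sum_subtractf)

lemma cdot_add_left: "cdot (y + z) x = cdot y x + cdot z x"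
  by (simp add: cdot_def distrib_right sum.distrib)

lemma cdot_scale_right: "cdot x (a *s y) = a * cdot x y"
  by (simp add: cdot_def sum_distrib_left mult_ac)

lemma cdot_scale_left: "cdot (a *s x) y = cnj a * cdot x y"
  by (simp add: cdot_def sum_distrib_left mult_ac)

lemma cnj_cdot: "cnj (cdot x y) = cdot y x"
  by (simp add: cdot_def mult.commute)

lemma Re_cdot_commute: "Re (cdot x y) = Re (cdot y x)"
  by (subst cnj_cdot[symmetric]) simp

lemma cdot_zero_left [simp]: "cdot 0 x = 0"
  by (simp add: cdot_def)

lemma cdot_mat: "cdot y (mat c *v x) = c * cdot y x"
proof -
  have "(mat c *v x) $ i = c * x $ i" for i
  proof -
    have "(mat c *v x) $ i = (\<Sum>j\<in>UNIV. if j = i then c * x $ i else 0)"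
      unfolding mat_vec_nth mat_def by (rule sum.cong) auto
    then show ?thesis by simp
  qed
  then have "mat c *v x = c *s x" by (simp add: vec_eq_iff)
  then show ?thesis by (simp add: cdot_scale_right)
qed

lemma cdot_self: "cdot x x = complex_of_real (\<Sum>i\<in>UNIV. (cmod (x $ i))\<^sup>2)"
  unfolding cdot_def of_real_sum
  by (rule sum.cong) (simp_all add: complex_norm_square mult.commute flip: of_real_power)

lemma cdot_self_eq_norm: "cdot x x = complex_of_real ((norm x)\<^sup>2)"
  by (simp add: cdot_self norm_vec_def L2_set_def sum_nonneg)

lemma Re_cdot_self_nonneg: "0 \<le> Re (cdot x x)"
  by (simp add: cdot_self_eq_norm)

lemma Re_cdot_self_pos: "x \<noteq> 0 \<Longrightarrow> 0 < Re (cdot x x)"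
  by (simp add: cdot_self_eq_norm)

lemma cdot_self_unimod: "unimod q \<Longrightarrow> cdot q q = of_nat CARD('n)"
  for q :: "complex^'n"
  unfolding unimod_def cdot_self by simp

section \<open>Spectral theorem for Hermitian matrices\<close>

definition quad_form :: "complex^'n^'n \<Rightarrow> complex^'n \<Rightarrow> real" where
  "quad_form S x = Re (cdot x (S *v x))"

definition unitary :: "complex^'n^'n \<Rightarrow> bool" where
  "unitary U \<longleftrightarrow> ctrans U ** U = mat 1"

lemma unitary_right_inverse: "unitary U \<Longrightarrow> U ** ctrans U = mat 1"
  unfolding unitary_def using matrix_left_right_inverse by blast

lemma scaleR_eq_of_real_scale: "t *\<^sub>R (x::complex^'n) = complex_of_real t *s x"
proof -
  have "(t *\<^sub>R x) $ i = (complex_of_real t *s x) $ i" for i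
    using scaleR_conv_of_real[of t "x $ i"] by simp
  then show ?thesis by (simp add: vec_eq_iff)
qed

lemma quad_form_scale: "quad_form S (complex_of_real c *s x) = c\<^sup>2 * quad_form S x"
  by (simp add: quad_form_def cdot_scale_left cdot_scale_right vector_scalar_commute power2_eq_square)

lemma cdot_add_scaled:
  "cdot (x + c *s y) (u + c *s w) = cdot x u + c * cdot x w + cnj c * cdot y u + cnj c * c * cdot y w"
  by (simp add: cdot_add_left cdot_add_right cdot_scale_left cdot_scale_right algebra_simps)

lemma Re_cdot_self_add_scaled:
  "Re (cdot (x + complex_of_real t *s y) (x + complex_of_real t *s y))
     = Re (cdot x x) + 2 * t * Re (cdot y x) + t\<^sup>2 * Re (cdot y y)"
  using Re_cdot_commute[of x y]
  by (simp add: cdot_add_scaled power2_eq_square algebra_simps)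

lemma quad_form_add_scaled:
  assumes "hermitian S"
  shows "quad_form S (x + complex_of_real t *s y)
           = quad_form S x + 2 * t * Re (cdot y (S *v x)) + t\<^sup>2 * quad_form S y"
proof -
  have "Re (cdot x (S *v y)) = Re (cdot y (S *v x))"
    by (metis Re_cdot_commute assms hermitian_cdot_swap)
  then show ?thesis
    by (simp add: quad_form_def matrix_vector_right_distrib vector_scalar_commute cdot_add_scaled
        power2_eq_square algebra_simps)
qed

lemma continuous_on_quad_form: "continuous_on A (quad_form S)"
proof -
  have "quad_form S = (\<lambda>x. Re (\<Sum>i\<in>UNIV. cnj (x $ i) * (\<Sum>j\<in>UNIV. S $ i $ j * x $ j)))"
    by (simp add: quad_form_def cdot_def mat_vec_nth fun_eq_iff)
  then show ?thesis by (simp, intro continuous_intros)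
qed

lemma quadratic_nonpos_imp_linear_coeff_zero:
  fixes a b :: real
  assumes "\<And>t. 2 * t * a + t\<^sup>2 * b \<le> 0"
  shows "a = 0"
proof -
  define c where "c = \<bar>b\<bar> + 1"
  have c: "c > 0" "2 * c + b > 0" by (auto simp: c_def)
  have "2 * (a / c) * a + (a / c)\<^sup>2 * b = a\<^sup>2 * (2 * c + b) / c\<^sup>2"
    using c by (simp add: field_simps power2_eq_square)
  then have "a\<^sup>2 * (2 * c + b) \<le> 0"
    using assms[of "a / c"] c by (simp add: divide_le_0_iff)
  then have "a\<^sup>2 \<le> 0" using c by (simp add: mult_le_0_iff)
  then show ?thesis by simp
qed

text \<open>A maximiser of the Hermitian form relative to the norm on an \<open>S\<close>-stable subspace is an
  eigenvector: the first-order condition says that \<open>S x\<^sub>0 - \<mu> x\<^sub>0\<close> is orthogonal to the subspace,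
  which contains it.\<close>
lemma quad_form_max_eigenvector:
  assumes herm: "hermitian S"
    and V_add: "\<And>x y. x \<in> V \<Longrightarrow> y \<in> V \<Longrightarrow> x + y \<in> V"
    and V_scale: "\<And>c x. x \<in> V \<Longrightarrow> c *s x \<in> V"
    and x0: "x0 \<in> V" and S_x0: "S *v x0 \<in> V"
    and bound: "\<And>y. y \<in> V \<Longrightarrow> quad_form S y \<le> \<mu> * Re (cdot y y)"
    and attained: "quad_form S x0 = \<mu> * Re (cdot x0 x0)"
  shows "S *v x0 = complex_of_real \<mu> *s x0"
proof -
  define w where "w = S *v x0 - complex_of_real \<mu> *s x0"
  have wV: "w \<in> V"
    using V_add[OF S_x0 V_scale[OF x0, of "- complex_of_real \<mu>"]] by (simp add: w_def)
  have orth: "Re (cdot y w) = 0" if yV: "y \<in> V" for y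
  proof (rule quadratic_nonpos_imp_linear_coeff_zero)
    fix t
    have "quad_form S (x0 + complex_of_real t *s y)
        \<le> \<mu> * Re (cdot (x0 + complex_of_real t *s y) (x0 + complex_of_real t *s y))"
      by (intro bound V_add V_scale x0 yV)
    then show "2 * t * Re (cdot y w) + t\<^sup>2 * (quad_form S y - \<mu> * Re (cdot y y)) \<le> 0"
      using attained unfolding quad_form_add_scaled[OF herm] Re_cdot_self_add_scaled
      by (simp add: w_def cdot_diff_right cdot_scale_right algebra_simps)
  qed
  have "w = 0" using orth[OF wV] Re_cdot_self_pos[of w] by fastforce
  then show ?thesis by (simp add: w_def)
qed

lemma exists_quad_form_max:
  fixes S :: "complex^'n^'n"
  assumes "closed V" and V_scale: "\<And>c x. x \<in> V \<Longrightarrow> c *s x \<in> V" and x1: "x1 \<in> V" "x1 \<noteq> 0"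
  shows "\<exists>x0\<in>V. cdot x0 x0 = 1 \<and> (\<forall>y\<in>V. quad_form S y \<le> quad_form S x0 * Re (cdot y y))"
proof -
  have normalize: "complex_of_real (1 / norm y) *s y \<in> V \<inter> sphere 0 1" if "y \<in> V" "y \<noteq> 0" for y
  proof -
    have "norm ((1 / norm y) *\<^sub>R y) = 1" using that(2) by simp
    then show ?thesis using V_scale[OF that(1)] by (simp add: scaleR_eq_of_real_scale)
  qed
  have "compact (V \<inter> sphere 0 1)" using assms(1) by (simp add: closed_Int_compact)
  moreover have "V \<inter> sphere 0 1 \<noteq> {}" using normalize[OF x1] by blast
  ultimately obtain x0 where x0: "x0 \<in> V \<inter> sphere 0 1"
    and max: "\<forall>y\<in>V \<inter> sphere 0 1. quad_form S y \<le> quad_form S x0"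
    using continuous_attains_sup[OF _ _ continuous_on_quad_form] by blast
  have "quad_form S y \<le> quad_form S x0 * Re (cdot y y)" if "y \<in> V" for y
  proof (cases "y = 0")
    case False
    have "(1 / norm y)\<^sup>2 * quad_form S y \<le> quad_form S x0"
      using max normalize[OF that False] by (simp flip: quad_form_scale)
    then show ?thesis using False by (simp add: cdot_self_eq_norm field_simps)
  qed (simp add: quad_form_def)
  moreover have "cdot x0 x0 = 1" using x0 by (simp add: cdot_self_eq_norm)
  ultimately show ?thesis using x0 by blast
qed

text \<open>The conjugates of \<open>f 0, \<dots>, f (k - 1)\<close> together with a zero row form a singular matrix;
  a nonzero kernel vector is orthogonal to all \<open>f i\<close>.\<close>
lemma exists_nonzero_orthogonal:
  fixes f :: "nat \<Rightarrow> complex^'n"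
  assumes "k < CARD('n)"
  shows "\<exists>x::complex^'n. x \<noteq> 0 \<and> (\<forall>i<k. cdot (f i) x = 0)"
proof -
  obtain h :: "'n \<Rightarrow> nat" where h: "bij_betw h UNIV {0..<CARD('n)}"
    using ex_bij_betw_finite_nat[of "UNIV::'n set"] by auto
  have h_range: "h ` UNIV = {0..<CARD('n)}" using h unfolding bij_betw_def by blast
  have "k \<in> h ` UNIV" using h_range assms by simp
  then obtain r where r: "h r = k" by blast
  define F :: "complex^'n^'n" where "F = (\<chi> r j. if h r < k then cnj (f (h r) $ j) else 0)"
  have "row r F = 0" unfolding row_def F_def using r by (simp add: vec_eq_iff)
  then have "\<not> invertible F" by (simp add: invertible_det_nz det_zero_row(1))
  then have "\<not> (\<exists>B. B ** F = mat 1)" using invertible_left_inverse[of F] by simp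
  then obtain x where x: "x \<noteq> 0" "F *v x = 0" using matrix_left_invertible_ker[of F] by blast
  have "cdot (f i) x = 0" if "i < k" for i
  proof -
    have "i \<in> h ` UNIV" using h_range that assms by simp
    then obtain r' where r': "h r' = i" by blast
    have "cdot (f i) x = (F *v x) $ r'" unfolding cdot_def F_def mat_vec_nth using r' that by simp
    then show ?thesis using x by simp
  qed
  then show ?thesis using x by blast
qed

lemma exists_orthogonal_eigenvector:
  fixes S :: "complex^'n^'n" and f :: "nat \<Rightarrow> complex^'n"
  assumes herm: "hermitian S" and eig: "\<forall>i<k. S *v f i = complex_of_real (lam i) *s f i"
    and k: "k < CARD('n)"
  shows "\<exists>x \<mu>. (\<forall>i<k. cdot (f i) x = 0) \<and> cdot x x = 1 \<and> S *v x = complex_of_real \<mu> *s x"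
proof -
  define V where "V = {x::complex^'n. \<forall>i<k. cdot (f i) x = 0}"
  have "V = (\<Inter>i\<in>{..<k}. {x. cdot (f i) x = 0})" by (auto simp: V_def)
  moreover have "continuous_on UNIV (\<lambda>x. cdot v (x::complex^'n))" for v
    unfolding cdot_def by (intro continuous_intros)
  ultimately have "closed V"
    by (simp add: closed_INT closed_Collect_eq)
  have V_add: "x + y \<in> V" if "x \<in> V" "y \<in> V" for x y
    using that by (simp add: V_def cdot_add_right)
  have V_scale: "c *s x \<in> V" if "x \<in> V" for x c
    using that by (simp add: V_def cdot_scale_right)
  have S_V: "S *v x \<in> V" if "x \<in> V" for x
  proof -
    have "cdot (f i) (S *v x) = complex_of_real (lam i) * cdot (f i) x" if "i < k" for i
      using eig that by (simp add: hermitian_cdot_swap[OF herm] cdot_scale_left)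
    then show ?thesis using \<open>x \<in> V\<close> by (simp add: V_def)
  qed
  obtain x1 where "x1 \<in> V" "x1 \<noteq> 0" using exists_nonzero_orthogonal[OF k] by (auto simp: V_def)
  then obtain x0 where x0: "x0 \<in> V" "cdot x0 x0 = 1"
    and bound: "\<forall>y\<in>V. quad_form S y \<le> quad_form S x0 * Re (cdot y y)"
    using exists_quad_form_max[OF \<open>closed V\<close> V_scale] by blast
  have "S *v x0 = complex_of_real (quad_form S x0) *s x0"
    using x0 bound by (intro quad_form_max_eigenvector[OF herm V_add V_scale _ S_V]) auto
  then show ?thesis using x0 unfolding V_def by blast
qed

lemma exists_orthonormal_eigenvectors:
  fixes S :: "complex^'n^'n"
  assumes herm: "hermitian S"
  shows "k \<le> CARD('n) \<Longrightarrow> \<exists>f lam. (\<forall>i<k. S *v f i = complex_of_real (lam i) *s f i) \<and>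
           (\<forall>i<k. \<forall>j<k. cdot (f i) (f j) = (if i = j then 1 else 0))"
proof (induction k)
  case (Suc k)
  then obtain f lam where eig: "\<forall>i<k. S *v f i = complex_of_real (lam i) *s f i"
    and orth: "\<forall>i<k. \<forall>j<k. cdot (f i) (f j) = (if i = j then 1 else 0)" by auto
  obtain x \<mu> where x: "\<forall>i<k. cdot (f i) x = 0" "cdot x x = 1" "S *v x = complex_of_real \<mu> *s x"
    using exists_orthogonal_eigenvector[OF herm eig] Suc.prems by auto
  have "\<forall>i<k. cdot x (f i) = 0" using x(1) by (metis cnj_cdot complex_cnj_zero)
  then show ?case using eig orth x
    by (intro exI[of _ "f(k := x)"] exI[of _ "lam(k := \<mu>)"]) (auto simp: less_Suc_eq)
qed simp

lemma matrix_mult_diagm_nth: "(A ** diagm v) $ i $ j = A $ i $ j * v $ j"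
proof -
  have "(A ** diagm v) $ i $ j = (\<Sum>k\<in>UNIV. if k = j then A $ i $ j * v $ j else 0)"
    unfolding mat_mul_nth diagm_def by (rule sum.cong) auto
  then show ?thesis by simp
qed

lemma diagm_matrix_mult_nth: "(diagm v ** A) $ i $ j = v $ i * A $ i $ j"
proof -
  have "(diagm v ** A) $ i $ j = (\<Sum>k\<in>UNIV. if k = i then v $ i * A $ i $ j else 0)"
    unfolding mat_mul_nth diagm_def by (rule sum.cong) auto
  then show ?thesis by simp
qed

lemma diagm_vector_nth: "(diagm v *v w) $ j = v $ j * w $ j"
proof -
  have "(diagm v *v w) $ j = (\<Sum>k\<in>UNIV. if k = j then v $ j * w $ j else 0)"
    unfolding mat_vec_nth diagm_def by (rule sum.cong) auto
  then show ?thesis by simp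
qed

lemma diagm_mult: "diagm a ** diagm b = diagm (\<chi> i. a $ i * b $ i)"
  by (simp add: vec_eq_iff matrix_mult_diagm_nth) (simp add: diagm_def)

lemma ctrans_matrix_mult_nth: "(ctrans A ** B) $ i $ j = cdot (column i A) (column j B)"
  by (simp add: mat_mul_nth cdot_def column_def)

lemma hermitian_diagonalization:
  fixes S :: "complex^'n^'n"
  assumes herm: "hermitian S"
  shows "\<exists>U d. unitary U \<and> S = U ** diagm (\<chi> j. complex_of_real (d j)) ** ctrans U"
proof -
  obtain f lam where eig: "\<forall>i<CARD('n). S *v f i = complex_of_real (lam i) *s f i"
    and orth: "\<forall>i<CARD('n). \<forall>j<CARD('n). cdot (f i) (f j) = (if i = j then 1 else 0)"
    using exists_orthonormal_eigenvectors[OF herm, of "CARD('n)"] by auto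
  obtain h :: "'n \<Rightarrow> nat" where h: "bij_betw h UNIV {0..<CARD('n)}"
    using ex_bij_betw_finite_nat[of "UNIV::'n set"] by auto
  have h_lt: "h j < CARD('n)" for j using h unfolding bij_betw_def by auto
  have h_eq: "h j = h l \<longleftrightarrow> j = l" for j l using h unfolding bij_betw_def inj_on_def by auto
  define U :: "complex^'n^'n" where "U = (\<chi> i j. f (h j) $ i)"
  define D :: "complex^'n^'n" where "D = diagm (\<chi> j. complex_of_real (lam (h j)))"
  have "(ctrans U ** U) $ j $ l = cdot (f (h j)) (f (h l))" for j l
    by (simp add: mat_mul_nth U_def cdot_def)
  then have U: "unitary U" using orth h_lt h_eq by (simp add: unitary_def vec_eq_iff mat1_nth)
  have "(S ** U) $ i $ j = (S *v f (h j)) $ i" for i j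
    by (simp add: mat_mul_nth mat_vec_nth U_def)
  then have "S ** U = U ** D"
    using eig h_lt by (simp add: vec_eq_iff matrix_mult_diagm_nth U_def D_def mult.commute)
  then have "S = U ** D ** ctrans U"
    by (metis U matrix_mul_assoc matrix_mul_rid unitary_right_inverse)
  then show ?thesis using U unfolding D_def by (intro exI[of _ U] exI[of _ "\<lambda>j. lam (h j)"]) simp
qed

lemma unitary_diagonalization_eigenvector:
  assumes U: "unitary U" and S: "S = U ** diagm (\<chi> j. complex_of_real (d j)) ** ctrans U"
  shows "S *v column j U = complex_of_real (d j) *s column j U"
proof -
  have "S ** U = U ** diagm (\<chi> j. complex_of_real (d j))"
    using U unfolding S unitary_def by (metis matrix_mul_assoc matrix_mul_rid)
  then have "S *v column j U = column j (U ** diagm (\<chi> j. complex_of_real (d j)))"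
    by (metis column_matrix_mult)
  then show ?thesis by (simp add: vec_eq_iff column_def matrix_mult_diagm_nth mult.commute)
qed

lemma unitary_column_unit: "unitary U \<Longrightarrow> cdot (column j U) (column j U) = 1"
  using ctrans_matrix_mult_nth[of U U j j] by (simp add: unitary_def mat1_nth)

lemma eigenvalue_le_lambda1:
  fixes Z :: "complex^'n^'n"
  assumes herm: "hermitian Z" and v: "v \<noteq> 0" "Z *v v = complex_of_real \<mu> *s v"
  shows "\<mu> \<le> lambda1 Z"
proof -
  obtain U d where U: "unitary U"
    and Z: "Z = U ** diagm (\<chi> j. complex_of_real (d j)) ** ctrans U"
    using hermitian_diagonalization[OF herm] by blast
  have "{x::real. \<exists>v. v \<noteq> 0 \<and> Z *v v = complex_of_real x *s v} \<subseteq> range d"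
  proof safe
    fix x and v :: "complex^'n" assume v: "v \<noteq> 0" "Z *v v = complex_of_real x *s v"
    define w where "w = ctrans U *v v"
    have "U *v w = v" using unitary_right_inverse[OF U] by (simp add: w_def matrix_vector_mul_assoc)
    then obtain j where j: "w $ j \<noteq> 0" using v(1) by (metis matrix_vector_mult_0_right vec_eq_iff zero_index)
    have "diagm (\<chi> j. complex_of_real (d j)) *v w = ctrans U *v (Z *v v)"
      using U unfolding Z w_def unitary_def by (simp add: matrix_vector_mul_assoc matrix_mul_assoc)
    also have "\<dots> = complex_of_real x *s w" using v(2) by (simp add: vector_scalar_commute w_def)
    finally have "(diagm (\<chi> j. complex_of_real (d j)) *v w) $ j = (complex_of_real x *s w) $ j"
      by simp
    then have "complex_of_real (d j) * w $ j = complex_of_real x * w $ j"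
      by (simp add: diagm_vector_nth)
    then show "x \<in> range d" using j by auto
  qed
  then have "finite {x::real. \<exists>v. v \<noteq> 0 \<and> Z *v v = complex_of_real x *s v}"
    by (rule finite_subset) simp
  then show ?thesis unfolding lambda1_def using v by (intro Max_ge) auto
qed

lemma quad_form_le_lambda1:
  fixes Z :: "complex^'n^'n"
  assumes herm: "hermitian Z"
  shows "quad_form Z x \<le> lambda1 Z * Re (cdot x x)"
proof -
  obtain U d where U: "unitary U"
    and Z: "Z = U ** diagm (\<chi> j. complex_of_real (d j)) ** ctrans U"
    using hermitian_diagonalization[OF herm] by blast
  have d_le: "d j \<le> lambda1 Z" for j
  proof (rule eigenvalue_le_lambda1[OF herm])
    show "column j U \<noteq> 0" using unitary_column_unit[OF U, of j] by auto
  qed (rule unitary_diagonalization_eigenvector[OF U Z])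
  define w where "w = ctrans U *v x"
  have "quad_form Z x = Re (cdot w (diagm (\<chi> j. complex_of_real (d j)) *v w))"
    unfolding quad_form_def Z w_def
    by (simp add: matrix_vector_mul_assoc[symmetric] cdot_matrix_vector)
  also have "\<dots> = Re (\<Sum>j\<in>UNIV. complex_of_real (d j * (cmod (w $ j))\<^sup>2))"
    unfolding cdot_def diagm_vector_nth
    by (rule arg_cong[where f = Re], rule sum.cong)
      (simp_all add: complex_norm_square mult_ac flip: of_real_power)
  also have "\<dots> = (\<Sum>j\<in>UNIV. d j * (cmod (w $ j))\<^sup>2)"
    by (simp add: Re_sum)
  also have "\<dots> \<le> (\<Sum>j\<in>UNIV. lambda1 Z * (cmod (w $ j))\<^sup>2)"
    by (intro sum_mono mult_right_mono d_le) simp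
  also have "\<dots> = lambda1 Z * Re (cdot w w)"
    by (simp add: cdot_self sum_distrib_left)
  also have "cdot w w = cdot x x"
    using unitary_right_inverse[OF U]
    by (simp add: w_def cdot_matrix_vector matrix_vector_mul_assoc)
  finally show ?thesis .
qed

section \<open>Positive definite matrices and the log-determinant\<close>

definition pd :: "complex^'n^'n \<Rightarrow> bool" where
  "pd A \<longleftrightarrow> hermitian A \<and> (\<forall>x. x \<noteq> 0 \<longrightarrow> 0 < quad_form A x)"

lemma pd_nonneg: "pd A \<Longrightarrow> 0 \<le> quad_form A x"
  unfolding pd_def by (cases "x = 0") (auto simp: quad_form_def intro: less_imp_le)

lemma pd_identity_plus_gram: "pd (mat 1 + P ** ctrans P)"
proof -
  have "quad_form (mat 1 + P ** ctrans P) x = Re (cdot x x) + Re (cdot (ctrans P *v x) (ctrans P *v x))" for x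
    by (simp add: quad_form_def matrix_vector_mult_add_rdistrib cdot_add_right cdot_matrix_vector
        flip: matrix_vector_mul_assoc)
  then show ?thesis
    unfolding pd_def hermitian_iff
    by (auto simp: ctrans_add ctrans_matrix_mult ctrans_mat intro!: add_pos_nonneg Re_cdot_self_pos
        Re_cdot_self_nonneg)
qed

lemma pd_diagonalization:
  fixes S :: "complex^'n^'n"
  assumes "pd S"
  shows "\<exists>U d. unitary U \<and> S = U ** diagm (\<chi> j. complex_of_real (d j)) ** ctrans U \<and> (\<forall>j. 0 < d j)"
proof -
  obtain U d where U: "unitary U" and S: "S = U ** diagm (\<chi> j. complex_of_real (d j)) ** ctrans U"
    using hermitian_diagonalization assms pd_def by blast
  have "d j = quad_form S (column j U)" for j
    using unitary_column_unit[OF U, of j]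
    by (simp add: quad_form_def unitary_diagonalization_eigenvector[OF U S] cdot_scale_right)
  moreover have "column j U \<noteq> 0" for j using unitary_column_unit[OF U, of j] by auto
  ultimately have "0 < d j" for j using assms by (simp add: pd_def)
  then show ?thesis using U S by blast
qed

lemma det_trace_unitary_diagonalization:
  assumes U: "unitary U" and S: "S = U ** diagm (\<chi> j. complex_of_real (d j)) ** ctrans U"
  shows "det S = complex_of_real (\<Prod>j\<in>UNIV. d j)" and "trace S = complex_of_real (\<Sum>j\<in>UNIV. d j)"
proof -
  have "det (ctrans U) * det U = 1" using U by (simp add: unitary_def flip: det_mul)
  moreover have "det S = det (diagm (\<chi> j. complex_of_real (d j))) * (det (ctrans U) * det U)"
    unfolding S by (simp add: det_mul mult_ac)
  moreover have "det (diagm (\<chi> j. complex_of_real (d j))) = complex_of_real (\<Prod>j\<in>UNIV. d j)"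
    by (subst det_diagonal) (simp_all add: diagm_def)
  ultimately show "det S = complex_of_real (\<Prod>j\<in>UNIV. d j)" by simp
  have "trace S = trace ((ctrans U ** U) ** diagm (\<chi> j. complex_of_real (d j)))"
    unfolding S by (subst trace_mul_sym) (simp add: matrix_mul_assoc)
  then show "trace S = complex_of_real (\<Sum>j\<in>UNIV. d j)"
    using U by (simp add: unitary_def trace_def diagm_def)
qed

lemma pd_det_real_pos:
  assumes "pd S"
  shows "det S = complex_of_real (Re (det S))" and "0 < Re (det S)"
proof -
  obtain U d where U: "unitary U" and S: "S = U ** diagm (\<chi> j. complex_of_real (d j)) ** ctrans U"
    and d: "\<forall>j. 0 < d j"
    using pd_diagonalization[OF assms] by blast
  note det = det_trace_unitary_diagonalization(1)[OF U S]
  show "det S = complex_of_real (Re (det S))"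
    unfolding det by simp
  show "0 < Re (det S)"
    unfolding det using d by (simp add: prod_pos del: of_real_prod)
qed

lemma ln_det_le_trace:
  fixes S :: "complex^'n^'n"
  assumes "pd S"
  shows "ln (Re (det S)) \<le> Re (trace S) - real CARD('n)"
proof -
  obtain U d where U: "unitary U" and S: "S = U ** diagm (\<chi> j. complex_of_real (d j)) ** ctrans U"
    and d: "\<forall>j. 0 < d j"
    using pd_diagonalization[OF assms] by blast
  have "ln (Re (det S)) = ln (\<Prod>j\<in>UNIV. d j)"
    by (simp add: det_trace_unitary_diagonalization(1)[OF U S] del: of_real_prod)
  also have "\<dots> = (\<Sum>j\<in>UNIV. ln (d j))"
    using d by (intro ln_prod) (simp_all add: less_imp_neq[symmetric])
  also have "\<dots> \<le> (\<Sum>j\<in>UNIV. d j - 1)"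
    using d by (intro sum_mono ln_le_minus_one) auto
  also have "\<dots> = Re (trace S) - real CARD('n)"
    by (simp add: det_trace_unitary_diagonalization(2)[OF U S] sum_subtractf del: of_real_sum)
  finally show ?thesis .
qed

lemma pd_congruent_identity:
  fixes G :: "complex^'n^'n"
  assumes "pd G"
  shows "\<exists>T::complex^'n^'n. ctrans T ** G ** T = mat 1"
proof -
  obtain V e where V: "unitary V" and G: "G = V ** diagm (\<chi> j. complex_of_real (e j)) ** ctrans V"
    and e: "\<forall>j. 0 < e j"
    using pd_diagonalization[OF assms] by blast
  define s where "s j = 1 / sqrt (e j)" for j
  define D where "D = diagm (\<chi> j. complex_of_real (s j))"
  have "s j * e j * s j = 1" for j
    using e[rule_format, of j] by (simp add: s_def field_simps)
  then have "D ** diagm (\<chi> j. complex_of_real (e j)) ** D = diagm (\<chi> j. 1)"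
    by (simp add: D_def diagm_mult flip: of_real_mult)
  also have "diagm (\<chi> j. 1) = mat 1"
    by (simp add: vec_eq_iff diagm_def mat1_nth)
  finally have "D ** diagm (\<chi> j. complex_of_real (e j)) ** D = mat 1" .
  moreover have "ctrans D = D" by (simp add: D_def ctrans_diagm)
  then have "ctrans (V ** D) ** G ** (V ** D)
      = D ** (ctrans V ** V) ** diagm (\<chi> j. complex_of_real (e j)) ** (ctrans V ** V) ** D"
    by (simp add: G ctrans_matrix_mult matrix_mul_assoc)
  ultimately have "ctrans (V ** D) ** G ** (V ** D) = mat 1"
    using V unfolding unitary_def by simp
  then show ?thesis by blast
qed

lemma congruent_identity_right_inverse:
  fixes G T :: "complex^'n^'n"
  assumes "ctrans T ** G ** T = mat 1"
  shows "G ** (T ** ctrans T) = mat 1"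
proof -
  have "T ** (ctrans T ** G) = mat 1"
    using matrix_left_right_inverse[of "ctrans T ** G" T] assms by simp
  then show ?thesis using matrix_left_right_inverse by (metis matrix_mul_assoc)
qed

lemma pd_matrix_inv:
  fixes G :: "complex^'n^'n"
  assumes "pd G"
  shows "G ** matrix_inv G = mat 1" and "matrix_inv G ** G = mat 1"
    and "ctrans (matrix_inv G) = matrix_inv G"
proof -
  obtain T :: "complex^'n^'n" where T: "ctrans T ** G ** T = mat 1"
    using pd_congruent_identity[OF assms] by blast
  note right_inverse = congruent_identity_right_inverse[OF T]
  have inv: "matrix_inv G = T ** ctrans T" by (rule matrix_inv_eq[OF right_inverse])
  show "G ** matrix_inv G = mat 1" using right_inverse inv by simp
  then show "matrix_inv G ** G = mat 1" using matrix_left_right_inverse by blast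
  show "ctrans (matrix_inv G) = matrix_inv G" by (simp add: inv ctrans_matrix_mult)
qed

lemma ln_det_diff_le_trace:
  fixes W G :: "complex^'n^'n"
  assumes W: "pd W" and G: "pd G"
  shows "ln (Re (det W)) - ln (Re (det G)) \<le> Re (trace (W ** matrix_inv G)) - real CARD('n)"
proof -
  obtain T :: "complex^'n^'n" where T: "ctrans T ** G ** T = mat 1"
    using pd_congruent_identity[OF G] by blast
  have Gi: "T ** ctrans T = matrix_inv G"
    using matrix_inv_eq[OF congruent_identity_right_inverse[OF T]] by simp
  define S where "S = ctrans T ** W ** T"
  have "T *v x \<noteq> 0" if "x \<noteq> 0" for x
  proof -
    have "x = (ctrans T ** G) *v (T *v x)" using T by (simp add: matrix_vector_mul_assoc)
    then show ?thesis using that by auto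
  qed
  moreover have "quad_form S x = quad_form W (T *v x)" for x
    unfolding S_def quad_form_def
    by (simp add: cdot_matrix_vector[of x "ctrans T"] flip: matrix_vector_mul_assoc)
  moreover have "hermitian S"
    using W by (simp add: S_def pd_def hermitian_iff ctrans_matrix_mult matrix_mul_assoc)
  ultimately have "pd S" using W by (simp add: pd_def)
  have "det S * det G = det W"
    using arg_cong[OF T, of det] by (simp add: S_def det_mul algebra_simps)
  then have "det W = complex_of_real (Re (det S)) * complex_of_real (Re (det G))"
    by (simp flip: pd_det_real_pos(1)[OF \<open>pd S\<close>] pd_det_real_pos(1)[OF G])
  then have "Re (det S) * Re (det G) = Re (det W)" by simp
  then have "ln (Re (det S)) = ln (Re (det W)) - ln (Re (det G))"
    using ln_mult[of "Re (det S)" "Re (det G)"] pd_det_real_pos(2)[OF \<open>pd S\<close>] pd_det_real_pos(2)[OF G]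
    by simp
  moreover have "trace S = trace (W ** matrix_inv G)"
    unfolding S_def Gi[symmetric] by (metis matrix_mul_assoc trace_mul_sym)
  ultimately show ?thesis using ln_det_le_trace[OF \<open>pd S\<close>] by simp
qed

lemma trace_gram_nonneg:
  fixes W :: "complex^'d^'d" and X :: "complex^'m^'d"
  assumes "pd W"
  shows "0 \<le> Re (trace (W ** X ** ctrans X))"
proof -
  have "trace (W ** X ** ctrans X) = trace (ctrans X ** (W ** X))" by (rule trace_mul_sym)
  also have "\<dots> = (\<Sum>j\<in>UNIV. cdot (column j X) (W *v column j X))"
    by (simp add: trace_def ctrans_matrix_mult_nth column_matrix_mult)
  finally show ?thesis
    using pd_nonneg[OF assms] by (simp add: Re_sum quad_form_def sum_nonneg)
qed

section \<open>A minorant of the log-determinant\<close>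

text \<open>For the linear model \<open>y = P^H s + n\<close> with white \<open>s\<close> and \<open>n\<close>, \<open>mse_matrix U P\<close> is the error
  covariance of the estimate \<open>U y\<close> of \<open>s\<close>; \<open>mmse_filter P\<close> and \<open>mmse_matrix P\<close> are the optimal
  filter and its error covariance, the paper's \<open>J_B\<close> and \<open>Q_B\<close>.\<close>

definition mse_matrix :: "complex^'n^'d \<Rightarrow> complex^'n^'d \<Rightarrow> complex^'d^'d" where
  "mse_matrix U P = mat 1 - U ** ctrans P - P ** ctrans U + U ** (mat 1 + ctrans P ** P) ** ctrans U"

definition mmse_filter :: "complex^'n^'d \<Rightarrow> complex^'n^'d" where
  "mmse_filter P = P ** matrix_inv (mat 1 + ctrans P ** P)"

definition mmse_matrix :: "complex^'n^'d \<Rightarrow> complex^'d^'d" where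
  "mmse_matrix P = mat 1 - P ** matrix_inv (mat 1 + ctrans P ** P) ** ctrans P"

lemma mse_matrix_completing_square:
  fixes P U :: "complex^'n^'d"
  assumes G_inv: "(mat 1 + P ** ctrans P) ** Gi = mat 1" and Gi_herm: "ctrans Gi = Gi"
  shows "mse_matrix U P = Gi + (U - Gi ** P) ** (mat 1 + ctrans P ** P) ** ctrans (U - Gi ** P)"
proof -
  define G where "G = mat 1 + P ** ctrans P"
  define K where "K = mat 1 + ctrans P ** P"
  define Y where "Y = U - Gi ** P"
  have GiG: "Gi ** G = mat 1" using G_inv matrix_left_right_inverse unfolding G_def by blast
  have PK: "P ** K = G ** P" and KP: "K ** ctrans P = ctrans P ** G"
    unfolding K_def G_def by (simp_all add: matrix_add_ldistrib matrix_mult_add_rdistrib matrix_mul_assoc)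
  have "Gi ** P ** K = Gi ** (G ** P)" by (simp add: PK flip: matrix_mul_assoc)
  also have "\<dots> = P" by (simp add: matrix_mul_assoc GiG)
  finally have YK: "Y ** K = U ** K - P" by (simp add: Y_def matrix_mult_diff_rdistrib)
  have "K ** (ctrans P ** Gi) = ctrans P ** (G ** Gi)" by (simp add: KP matrix_mul_assoc)
  then have UKPGi: "U ** K ** (ctrans P ** Gi) = U ** ctrans P"
    using G_inv by (simp add: G_def flip: matrix_mul_assoc)
  have PPGi: "P ** (ctrans P ** Gi) = mat 1 - Gi"
    using G_inv by (simp add: matrix_mul_assoc G_def matrix_mult_add_rdistrib algebra_simps)
  have "Y ** K ** ctrans Y = mse_matrix U P - Gi"
    using YK UKPGi PPGi unfolding mse_matrix_def K_def[symmetric]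
    by (simp add: Y_def ctrans_diff ctrans_matrix_mult Gi_herm matrix_mult_diff_ldistrib
        matrix_mult_diff_rdistrib matrix_mul_assoc algebra_simps)
  then show ?thesis by (simp add: Y_def K_def)
qed

lemma ln_det_ge_mse_bound:
  fixes P U :: "complex^'n^'d" and W :: "complex^'d^'d"
  assumes W: "pd W"
  shows "ln (Re (det W)) + real CARD('d) - Re (trace (W ** mse_matrix U P))
           \<le> ln (Re (det (mat 1 + P ** ctrans P)))"
proof -
  define G where "G = mat 1 + P ** ctrans P"
  define Gi where "Gi = matrix_inv G"
  define Y where "Y = U - Gi ** P"
  have G: "pd G" unfolding G_def by (rule pd_identity_plus_gram)
  have "mse_matrix U P = Gi + Y ** ctrans Y + (Y ** ctrans P) ** ctrans (Y ** ctrans P)"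
    using mse_matrix_completing_square[of P Gi U] pd_matrix_inv[OF G]
    by (simp add: G_def Gi_def Y_def ctrans_matrix_mult matrix_add_ldistrib matrix_mult_add_rdistrib
        matrix_mul_assoc)
  then have "trace (W ** mse_matrix U P)
      = trace (W ** Gi) + trace (W ** Y ** ctrans Y) + trace (W ** (Y ** ctrans P) ** ctrans (Y ** ctrans P))"
    by (simp add: matrix_add_ldistrib trace_add matrix_mul_assoc)
  then have "Re (trace (W ** Gi)) \<le> Re (trace (W ** mse_matrix U P))"
    using trace_gram_nonneg[OF W, of Y] trace_gram_nonneg[OF W, of "Y ** ctrans P"] by simp
  moreover have "ln (Re (det W)) - ln (Re (det G)) \<le> Re (trace (W ** Gi)) - real CARD('d)"
    using ln_det_diff_le_trace[OF W G] by (simp add: Gi_def)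
  ultimately show ?thesis by (simp add: G_def)
qed

lemma mmse_matrix_factors:
  fixes P :: "complex^'n^'d"
  defines "M \<equiv> matrix_inv (mat 1 + ctrans P ** P)"
  shows "mmse_filter P ** ctrans P = mat 1 - mmse_matrix P"
    and "P ** ctrans (mmse_filter P) = mat 1 - mmse_matrix P"
    and "mmse_filter P ** (mat 1 + ctrans P ** P) ** ctrans (mmse_filter P) = mat 1 - mmse_matrix P"
proof -
  have K: "pd (mat 1 + ctrans P ** P)" using pd_identity_plus_gram[of "ctrans P"] by simp
  note M_inv = pd_matrix_inv[OF K, folded M_def]
  show "mmse_filter P ** ctrans P = mat 1 - mmse_matrix P"
    by (simp add: mmse_filter_def mmse_matrix_def M_def)
  show "P ** ctrans (mmse_filter P) = mat 1 - mmse_matrix P"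
    by (simp add: mmse_filter_def mmse_matrix_def ctrans_matrix_mult M_inv(3) matrix_mul_assoc
        flip: M_def)
  have "mmse_filter P ** (mat 1 + ctrans P ** P) ** ctrans (mmse_filter P)
      = P ** (M ** (mat 1 + ctrans P ** P)) ** M ** ctrans P"
    by (simp add: mmse_filter_def ctrans_matrix_mult M_inv(3) matrix_mul_assoc flip: M_def)
  then show "mmse_filter P ** (mat 1 + ctrans P ** P) ** ctrans (mmse_filter P) = mat 1 - mmse_matrix P"
    by (simp add: M_inv(2) mmse_matrix_def flip: M_def)
qed

lemma mse_matrix_mmse_filter: "mse_matrix (mmse_filter P) P = mmse_matrix P"
  using mmse_matrix_factors[of P] by (simp add: mse_matrix_def)

text \<open>The Woodbury identity.\<close>
lemma mmse_matrix_inverse: "mmse_matrix P ** (mat 1 + P ** ctrans P) = mat 1"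
proof -
  have "mmse_matrix P ** (mat 1 + P ** ctrans P)
      = mat 1 + P ** ctrans P - mmse_filter P ** (mat 1 + ctrans P ** P) ** ctrans P"
    by (simp add: mmse_matrix_def mmse_filter_def matrix_add_ldistrib matrix_mult_add_rdistrib
        matrix_mult_diff_rdistrib matrix_mul_assoc algebra_simps)
  also have "mmse_filter P ** (mat 1 + ctrans P ** P) = P"
    using pd_matrix_inv(2)[OF pd_identity_plus_gram[of "ctrans P"]]
    by (simp add: mmse_filter_def flip: matrix_mul_assoc)
  finally show ?thesis by simp
qed

lemma Re_trace_mse_matrix:
  fixes W :: "complex^'d^'d" and U P :: "complex^'n^'d"
  assumes "hermitian W"
  shows "Re (trace (W ** mse_matrix U P)) = Re (trace W) - 2 * Re (trace (W ** U ** ctrans P))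
           + Re (trace (W ** U ** ctrans U)) + Re (trace (W ** U ** ctrans P ** P ** ctrans U))"
proof -
  have "trace (W ** P ** ctrans U) = cnj (trace (U ** ctrans P ** W))"
    using assms by (simp add: hermitian_iff ctrans_matrix_mult matrix_mul_assoc flip: trace_ctrans)
  also have "trace (U ** ctrans P ** W) = trace (W ** U ** ctrans P)"
    by (simp add: trace_mul_sym[of "U ** ctrans P"] matrix_mul_assoc)
  finally have "Re (trace (W ** P ** ctrans U)) = Re (trace (W ** U ** ctrans P))" by simp
  moreover have "trace (W ** mse_matrix U P) = trace W - trace (W ** U ** ctrans P)
      - trace (W ** P ** ctrans U) + trace (W ** U ** ctrans U) + trace (W ** U ** ctrans P ** P ** ctrans U)"
    by (simp add: mse_matrix_def matrix_add_ldistrib matrix_mult_add_rdistrib matrix_mult_diff_ldistrib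
        trace_add trace_sub matrix_mul_assoc)
  ultimately show ?thesis by simp
qed

definition ln_det_minorant :: "complex^'n^'d \<Rightarrow> complex^'n^'d \<Rightarrow> real" where
  "ln_det_minorant Pt P =
    (let Qi = matrix_inv (mmse_matrix Pt); J = mmse_filter Pt in
      - ln (Re (det (mmse_matrix Pt))) + 2 * real CARD('d) - 2 * Re (trace Qi)
      + Re (trace (Qi ** J ** ctrans Pt ** Pt ** ctrans J))
      + 2 * Re (trace (Qi ** J ** ctrans P)) - Re (trace (Qi ** J ** ctrans P ** P ** ctrans J)))"

lemma ln_det_minorant_eq_mse:
  fixes Pt P :: "complex^'n^'d"
  defines "W \<equiv> mat 1 + Pt ** ctrans Pt"
  shows "ln_det_minorant Pt P
           = ln (Re (det W)) + real CARD('d) - Re (trace (W ** mse_matrix (mmse_filter Pt) P))"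
proof -
  define J where "J = mmse_filter Pt"
  have W: "pd W" unfolding W_def by (rule pd_identity_plus_gram)
  have QW: "mmse_matrix Pt ** W = mat 1" unfolding W_def by (rule mmse_matrix_inverse)
  then have WQ: "W ** mmse_matrix Pt = mat 1" using matrix_left_right_inverse by blast
  have "det (mmse_matrix Pt) * det W = 1" using QW by (simp flip: det_mul)
  moreover have "det W \<noteq> 0" using pd_det_real_pos(2)[OF W] by auto
  ultimately have "det (mmse_matrix Pt) = 1 / det W" by (simp add: eq_divide_eq)
  then have "Re (det (mmse_matrix Pt)) = 1 / Re (det W)"
    by (subst (asm) pd_det_real_pos(1)[OF W]) simp
  then have ln_det_Q: "ln (Re (det (mmse_matrix Pt))) = - ln (Re (det W))"
    using pd_det_real_pos(2)[OF W] by (simp add: ln_div)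
  have "trace (W ** J ** (mat 1 + ctrans Pt ** Pt) ** ctrans J) = trace W - of_nat CARD('d)"
    using mmse_matrix_factors(3)[of Pt] WQ
    by (simp add: J_def matrix_mult_diff_ldistrib trace_sub trace_I flip: matrix_mul_assoc)
  then have tr: "trace (W ** J ** ctrans J) + trace (W ** J ** ctrans Pt ** Pt ** ctrans J)
      = trace W - of_nat CARD('d)"
    by (simp add: matrix_add_ldistrib matrix_mult_add_rdistrib trace_add matrix_mul_assoc)
  have "Re (trace (W ** J ** ctrans J)) + Re (trace (W ** J ** ctrans Pt ** Pt ** ctrans J))
      = Re (trace W) - real CARD('d)"
    using arg_cong[OF tr, of Re] by simp
  moreover have "hermitian W" using W by (simp add: pd_def)
  ultimately show ?thesis
    using Re_trace_mse_matrix[of W J P] ln_det_Q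
    by (simp add: ln_det_minorant_def Let_def matrix_inv_eq[OF QW] J_def)
qed

lemma ln_det_minorant_le: "ln_det_minorant Pt P \<le> ln (Re (det (mat 1 + P ** ctrans P)))"
  using ln_det_ge_mse_bound[OF pd_identity_plus_gram[of Pt]] by (simp add: ln_det_minorant_eq_mse)

lemma ln_det_minorant_self: "ln_det_minorant Pt Pt = ln (Re (det (mat 1 + Pt ** ctrans Pt)))"
proof -
  have "(mat 1 + Pt ** ctrans Pt) ** mmse_matrix Pt = mat 1"
    using mmse_matrix_inverse matrix_left_right_inverse by blast
  then show ?thesis by (simp add: ln_det_minorant_eq_mse mse_matrix_mmse_filter trace_I)
qed

section \<open>Diagonal scalings, phases and the quadratic minorant\<close>

lemma trace_mult_ctrans_diagm: "trace (A ** ctrans (diagm q)) = cdot q (diagv A)"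
proof -
  have "(A ** ctrans (diagm q)) $ i $ i = cnj (q $ i) * A $ i $ i" for i
    by (simp add: ctrans_diagm matrix_mult_diagm_nth mult.commute)
  then show ?thesis by (simp add: trace_def cdot_def diagv_def)
qed

lemma trace_diagm_sandwich:
  "trace (ctrans (diagm q) ** A ** diagm q ** B) = cdot q (hadamard A (transpose B) *v q)"
proof -
  have "(ctrans (diagm q) ** A ** diagm q) $ i $ j = cnj (q $ i) * A $ i $ j * q $ j" for i j
    by (simp add: matrix_mult_diagm_nth ctrans_diagm diagm_matrix_mult_nth)
  then show ?thesis
    by (simp add: trace_def mat_mul_nth[of "ctrans (diagm q) ** A ** diagm q"] cdot_def hadamard_def
        mat_vec_nth transpose_def sum_distrib_left mult_ac)
qed

lemma trace_mult_ctrans_scaled: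
  "trace (X ** ctrans (H ** diagm q ** B)) = cdot q (diagv (ctrans H ** X ** ctrans B))"
proof -
  have "trace (X ** ctrans (H ** diagm q ** B)) = trace ((X ** ctrans B ** ctrans (diagm q)) ** ctrans H)"
    by (simp add: ctrans_matrix_mult matrix_mul_assoc)
  also have "\<dots> = trace (ctrans H ** X ** ctrans B ** ctrans (diagm q))"
    by (simp add: trace_mul_sym[of _ "ctrans H"] matrix_mul_assoc)
  finally show ?thesis by (simp add: trace_mult_ctrans_diagm)
qed

lemma trace_quadratic_scaled:
  "trace (X ** ctrans (H ** diagm q ** B) ** (H ** diagm q ** B) ** Y)
     = cdot q (hadamard (ctrans H ** H) (transpose (B ** Y ** X ** ctrans B)) *v q)"
proof -
  have "trace (X ** ctrans (H ** diagm q ** B) ** (H ** diagm q ** B) ** Y)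
      = trace ((X ** ctrans B) ** (ctrans (diagm q) ** (ctrans H ** H) ** diagm q ** (B ** Y)))"
    by (simp add: ctrans_matrix_mult matrix_mul_assoc)
  also have "\<dots> = trace ((ctrans (diagm q) ** (ctrans H ** H) ** diagm q ** (B ** Y)) ** (X ** ctrans B))"
    by (rule trace_mul_sym)
  also have "\<dots> = trace (ctrans (diagm q) ** (ctrans H ** H) ** diagm q ** (B ** Y ** X ** ctrans B))"
    by (simp add: matrix_mul_assoc)
  finally show ?thesis by (simp only: trace_diagm_sandwich)
qed

lemma hermitian_hadamard_transpose:
  assumes "hermitian A" "hermitian B"
  shows "hermitian (hadamard A (transpose B))"
proof -
  have "cnj (A $ j $ i) = A $ i $ j" "cnj (B $ j $ i) = B $ i $ j" for i j
    using assms by (metis ctrans_nth hermitian_iff)+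
  then show ?thesis by (simp add: hermitian_iff hadamard_def vec_eq_iff transpose_def)
qed

text \<open>Expand \<open>0 \<le> (q - q_t)^H (\<lambda>_1 I - Z) (q - q_t)\<close> and use \<open>q^H q = q_t^H q_t = n\<close>.\<close>
lemma unimod_quad_form_minorant:
  fixes Z :: "complex^'n^'n"
  assumes herm: "hermitian Z" and q: "unimod q" and qt: "unimod qt"
  shows "- 2 * real CARD('n) * lambda1 Z
           + 2 * Re (cdot q ((mat (complex_of_real (lambda1 Z)) - Z) *v qt)) + quad_form Z qt
         \<le> - quad_form Z q"
proof -
  define M where "M = mat (complex_of_real (lambda1 Z)) - Z"
  have M_herm: "hermitian M"
    using herm by (simp add: M_def hermitian_iff ctrans_diff ctrans_mat)
  have M_form: "quad_form M x = lambda1 Z * Re (cdot x x) - quad_form Z x" for x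
    by (simp add: M_def quad_form_def matrix_vector_mult_diff_rdistrib cdot_diff_right cdot_mat)
  have "0 \<le> quad_form M (q - qt)"
    using quad_form_le_lambda1[OF herm, of "q - qt"] by (simp add: M_form)
  also have "quad_form M (q - qt) = quad_form M q - 2 * Re (cdot q (M *v qt)) + quad_form M qt"
    using quad_form_add_scaled[OF M_herm, of q "-1" qt] Re_cdot_commute[of q "M *v qt"]
    by (simp add: hermitian_cdot_swap[OF M_herm])
  finally show ?thesis
    using cdot_self_unimod[OF q] cdot_self_unimod[OF qt] unfolding M_def[symmetric]
    by (simp add: M_form algebra_simps)
qed

lemma unimod_quad_form_minorant_self:
  fixes Z :: "complex^'n^'n"
  assumes "unimod qt"
  shows "- 2 * real CARD('n) * lambda1 Z
           + 2 * Re (cdot qt ((mat (complex_of_real (lambda1 Z)) - Z) *v qt)) + quad_form Z qt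
         = - quad_form Z qt"
  using cdot_self_unimod[OF assms]
  by (simp add: quad_form_def matrix_vector_mult_diff_rdistrib cdot_diff_right cdot_mat)

lemma Re_cdot_unimod_le: "unimod q \<Longrightarrow> Re (cdot q v) \<le> (\<Sum>k\<in>UNIV. cmod (v $ k))"
  unfolding cdot_def Re_sum
  by (intro sum_mono) (metis complex_Re_le_cmod complex_mod_cnj mult_cancel_right1 norm_mult unimod_def)

lemma Re_cdot_phase_aligned:
  assumes "\<forall>k. v $ k \<noteq> 0 \<longrightarrow> q $ k = exp (\<i> * complex_of_real (Arg (v $ k)))"
  shows "Re (cdot q v) = (\<Sum>k\<in>UNIV. cmod (v $ k))"
proof -
  have "cnj (q $ k) * v $ k = complex_of_real (cmod (v $ k))" for k
  proof (cases "v $ k = 0")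
    case False
    then have "cnj (q $ k) * v $ k = cnj (v $ k) * v $ k / complex_of_real (cmod (v $ k))"
      using assms cis_Arg[OF False] by (simp add: cis_conv_exp sgn_eq)
    also have "cnj (v $ k) * v $ k = complex_of_real (cmod (v $ k)) * complex_of_real (cmod (v $ k))"
      using complex_norm_square[of "v $ k"] by (simp add: power2_eq_square mult.commute)
    finally show ?thesis using False by simp
  qed simp
  then show ?thesis by (simp add: cdot_def Re_sum)
qed

lemma ln_det_minorant_diagm:
  fixes H :: "complex^'n^'d" and B :: "complex^'n^'n" and Pt :: "complex^'n^'d"
  assumes "ctrans B = B"
  defines "Qi \<equiv> matrix_inv (mmse_matrix Pt)" and "J \<equiv> mmse_filter Pt"
  shows "ln_det_minorant Pt (H ** diagm q ** B)
           = - ln (Re (det (mmse_matrix Pt))) + 2 * real CARD('d) - 2 * Re (trace Qi)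
             + Re (trace (Qi ** J ** ctrans Pt ** Pt ** ctrans J))
             + 2 * Re (cdot q (diagv (ctrans H ** Qi ** J ** B)))
             - quad_form (hadamard (ctrans H ** H) (transpose (B ** ctrans J ** Qi ** J ** B))) q"
  unfolding ln_det_minorant_def Let_def trace_mult_ctrans_scaled trace_quadratic_scaled
  by (simp add: assms(1) quad_form_def matrix_mul_assoc flip: Qi_def J_def)

theorem proposition3:
  fixes H_AI :: "complex^'m^'n" and H_IB :: "complex^'n^'d"
    and R :: "complex^'m^'m" and qt :: "complex^'n"
    and L Lh :: "complex^'n^'n" and g gt :: "complex^'n \<Rightarrow> real"
    and C1 C2 :: real
    and Pt JB :: "complex^'n^'d" and QB :: "complex^'d^'d"
    and A1 :: "complex^'n^'d" and A2 A4 Z :: "complex^'n^'n" and A3 :: "complex^'d^'n"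
    and a4 v :: "complex^'n"
  assumes R_psd: "psd R"
    and Lh_psd: "psd Lh"
    and Lh_sqrt: "Lh ** Lh = L"
    and qt_unimod: "unimod qt"
    and L_def: "L = H_AI ** R ** ctrans H_AI"
    and g_def: "g = (\<lambda>q. ln (Re (det (mat 1 + H_IB ** diagm q ** L ** ctrans (diagm q) ** ctrans H_IB))))"
    and Pt_def: "Pt = H_IB ** diagm qt ** Lh"
    and QB_def: "QB = mat 1 - Pt ** matrix_inv (mat 1 + ctrans Pt ** Pt) ** ctrans Pt"
    and JB_def: "JB = Pt ** matrix_inv (mat 1 + ctrans Pt ** Pt)"
    and A1_def: "A1 = matrix_inv QB ** JB ** Lh"
    and A2_def: "A2 = ctrans H_IB ** H_IB"
    and A3_def: "A3 = Lh ** ctrans JB"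
    and A4_def: "A4 = ctrans H_IB ** matrix_inv QB ** JB ** Lh"
    and Z_def: "Z = hadamard A2 (transpose (A3 ** A1))"
    and a4_def: "a4 = diagv A4"
    and C1_def: "C1 = - ln (Re (det QB)) + real CARD('d) - Re (trace (matrix_inv QB))"
    and C2_def: "C2 = real CARD('d) - Re (trace (matrix_inv QB))
               + Re (trace (matrix_inv QB ** JB ** ctrans Pt ** Pt ** ctrans JB))"
    and gt_def: "gt = (\<lambda>q. - 2 * real CARD('n) * lambda1 Z
               + 2 * Re (cdot q ((mat (complex_of_real (lambda1 Z)) - Z) *v qt))
               + Re (cdot qt (Z *v qt))
               + 2 * Re (cdot q a4) + C1 + C2)"
    and v_def: "v = (mat (complex_of_real (lambda1 Z)) - Z) *v qt + a4"
  shows "(\<forall>q. unimod q \<longrightarrow> g q \<ge> gt q) \<and> g qt = gt qt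
         \<and> (\<forall>qs. unimod qs \<and> (\<forall>k. v $ k \<noteq> 0 \<longrightarrow> qs $ k = exp (\<i> * complex_of_real (Arg (v $ k))))
                \<longrightarrow> (\<forall>q. unimod q \<longrightarrow> gt q \<le> gt qs))"
proof -
  have Lh_herm: "ctrans Lh = Lh" using Lh_psd by (simp add: psd_def hermitian_iff)
  define P where "P q = H_IB ** diagm q ** Lh" for q
  have g_P: "g q = ln (Re (det (mat 1 + P q ** ctrans (P q))))" for q
    by (simp add: g_def P_def Lh_sqrt[symmetric] ctrans_matrix_mult Lh_herm matrix_mul_assoc)
  have QB: "QB = mmse_matrix Pt" and JB: "JB = mmse_filter Pt"
    by (simp_all add: QB_def JB_def mmse_matrix_def mmse_filter_def)
  have QB_inv: "matrix_inv QB = mat 1 + Pt ** ctrans Pt"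
    unfolding QB by (rule matrix_inv_eq[OF mmse_matrix_inverse])
  have Z_herm: "hermitian Z"
    unfolding Z_def A1_def A2_def A3_def
    by (intro hermitian_hadamard_transpose)
      (simp_all add: hermitian_iff QB_inv ctrans_matrix_mult ctrans_add ctrans_mat Lh_herm matrix_mul_assoc)
  have minorant: "ln_det_minorant Pt (P q) = C1 + C2 + 2 * Re (cdot q a4) - quad_form Z q" for q
    unfolding P_def ln_det_minorant_diagm[OF Lh_herm]
    by (simp add: C1_def C2_def a4_def A4_def Z_def A1_def A2_def A3_def matrix_mul_assoc flip: QB JB)
  have lower: "gt q \<le> g q" if "unimod q" for q
    using unimod_quad_form_minorant[OF Z_herm that qt_unimod] ln_det_minorant_le[of Pt "P q"]
    by (simp add: gt_def g_P minorant quad_form_def)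
  have "P qt = Pt" by (simp add: P_def Pt_def)
  then have tight: "g qt = gt qt"
    using minorant[of qt] ln_det_minorant_self[of Pt] unimod_quad_form_minorant_self[OF qt_unimod, of Z]
    by (simp add: gt_def g_P quad_form_def)
  have aligned: "gt q \<le> gt qs"
    if "unimod q" and "\<forall>k. v $ k \<noteq> 0 \<longrightarrow> qs $ k = exp (\<i> * complex_of_real (Arg (v $ k)))" for q qs
    using Re_cdot_unimod_le[OF that(1), of v] Re_cdot_phase_aligned[OF that(2)]
    by (simp add: gt_def v_def cdot_add_right)
  show ?thesis using lower tight aligned by blast
qed

end
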